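(* Let $n\ge t\ge 1$ be integers and let $\Bbbk$ be a field. If $n\ge 2t+1$, then $\widetilde{H}_p(\Omega^n_t;\Bbbk)\cong \widetilde{H}_{p-2}(\Omega^{n-t-1}_t;\Bbbk)$ for every integer $p$. Otherwise, for every integer $p$, $$\widetilde{H}_p(\Omega^n_t;\Bbbk)\cong\begin{cases}\widetilde{H}_p(\{\emptyset\};\Bbbk) & \text{if } n=t,\\ \widetilde{H}_{p-1}(\{\emptyset\};\Bbbk) & \text{if } n=t+1,\\ 0 & \text{if } t+2\le n\le 2t.\end{cases}$$
   Context: For integers $n\ge t\ge 1$, $\Omega^n_t$ is the simplicial complex on vertex set $\{1,\dots,n\}$ whose facets are the sets $\{1,\dots,n\}\setminus\{i,i+1,\dots,i+t-1\}$ for $i=1,\dots,n-t+1$ (so $\Omega^t_t=\{\emptyset\}$). $\widetilde{H}_p(\cdot;\Bbbk)$ denotes reduced simplicial homology over $\Bbbk$. The irrelevant complex $\{\emptyset\}$ has $\widetilde{H}_{-1}(\{\emptyset\};\Bbbk)\cong\Bbbk$ and $\widetilde{H}_p(\{\emptyset\};\Bbbk)=0$ for $p\neq -1$. *)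

theory Defs
  imports Complex_Main "HOL-Library.Function_Algebras"
begin

text \<open>Simplicial complexes on vertex set nat are represented by their set of faces
(a downward closed family of finite sets, containing the empty face).\<close>

definition Omega :: "nat \<Rightarrow> nat \<Rightarrow> nat set set" where
  "Omega n t = {\<sigma>. \<exists>i\<in>{1..n - t + 1}. \<sigma> \<subseteq> {1..n} - {i..i + t - 1}}"

definition irrelevant_complex :: "nat set set" where
  "irrelevant_complex = {{}}"

text \<open>A p-face has p+1 vertices; C_(-1) is spanned by the empty face. Faces are
oriented by the natural order of their vertices.\<close>

definition faces :: "nat set set \<Rightarrow> int \<Rightarrow> nat set set" where
  "faces K p = {\<sigma>\<in>K. finite \<sigma> \<and> int (card \<sigma>) = p + 1}"

definition chains :: "nat set set \<Rightarrow> int \<Rightarrow> (nat set \<Rightarrow> 'k::field) set" where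
  "chains K p = {c. \<forall>\<sigma>. c \<sigma> \<noteq> 0 \<longrightarrow> \<sigma> \<in> faces K p}"

definition bd :: "nat set set \<Rightarrow> int \<Rightarrow> (nat set \<Rightarrow> 'k::field) \<Rightarrow> (nat set \<Rightarrow> 'k)" where
  "bd K p c = (\<lambda>\<tau>. if \<tau> \<in> faces K (p - 1)
      then (\<Sum>v\<in>{v. v \<notin> \<tau> \<and> insert v \<tau> \<in> faces K p}.
              (-1) ^ card {u\<in>\<tau>. u < v} * c (insert v \<tau>))
      else 0)"

definition cycles :: "nat set set \<Rightarrow> int \<Rightarrow> (nat set \<Rightarrow> 'k::field) set" where
  "cycles K p = {c\<in>chains K p. bd K p c = 0}"

definition boundaries :: "nat set set \<Rightarrow> int \<Rightarrow> (nat set \<Rightarrow> 'k::field) set" where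
  "boundaries K p = bd K (p + 1) ` chains K (p + 1)"

abbreviation fscale :: "'k::field \<Rightarrow> (nat set \<Rightarrow> 'k) \<Rightarrow> (nat set \<Rightarrow> 'k)" where
  "fscale a f \<equiv> (\<lambda>x. a * f x)"

lemma vector_space_fscale: "vector_space (fscale :: 'k::field \<Rightarrow> _)"
  by unfold_locales (auto simp: algebra_simps fun_eq_iff)

definition rhom_dim :: "'k::field itself \<Rightarrow> nat set set \<Rightarrow> int \<Rightarrow> nat" where
  "rhom_dim TYPE('k) K p =
     vector_space.dim (fscale :: 'k \<Rightarrow> _) (cycles K p :: (nat set \<Rightarrow> 'k) set)
   - vector_space.dim (fscale :: 'k \<Rightarrow> _) (boundaries K p :: (nat set \<Rightarrow> 'k) set)"

end

theory Submission
  imports Defs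
begin

text \<open>The faces \<open>\<sigma>\<close> of \<open>Omega n t\<close> such that \<open>\<sigma> \<union> {n}\<close> is again a face form a cone with apex
  \<open>n\<close> that is closed under taking faces. Removing this acyclic part does not change homology and
  leaves \<open>blocking t j\<close>, \<open>j = n - t\<close>: the sets \<open>\<sigma> \<subseteq> {1..j}\<close> meeting every window of \<open>t\<close>
  consecutive integers that starts in \<open>{1..j}\<close>. For \<open>j > t\<close>, the faces \<open>\<sigma>\<close> of \<open>blocking t j\<close> with
  \<open>\<sigma> - {j - 1}\<close> still a face form a cone with apex \<open>j - 1\<close> closed under taking cofaces;
  removing it leaves the sets \<open>\<gamma> \<union> {j - 1, j}\<close> with \<open>\<gamma> \<in> blocking t (j - t - 1)\<close>, whose
  homology is that of \<open>blocking t (j - t - 1)\<close> shifted up by two, and the latter is homologous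
  to \<open>Omega (j - 1) t\<close> by the first step. For \<open>2 \<le> j \<le> t\<close>, \<open>blocking t j\<close> consists of the
  subsets of \<open>{1..j}\<close> containing \<open>j\<close>, a cone with apex \<open>1\<close>, while \<open>blocking t 1 = {{1}}\<close>.

  Homology is only available as the dimension count \<open>dim Z - dim B\<close>, so each isomorphism is
  realised by a linear map carrying cycles onto cycles and boundaries onto boundaries whose
  kernel on cycles consists of boundaries.\<close>

section \<open>Linear algebra\<close>

context vector_space
begin

lemma span_inter_span_eq_0_if_independent:
  assumes ind: "independent (A \<union> C)" and disj: "A \<inter> C = {}" and fin: "finite (A \<union> C)"
    and xA: "x \<in> span A" and xC: "x \<in> span C"
  shows "x = 0"
proof -
  have finA: "finite A" and finC: "finite C" using fin by auto
  obtain a where a: "x = (\<Sum>v\<in>A. scale (a v) v)" using xA span_finite[OF finA] by blast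
  obtain c where c: "x = (\<Sum>v\<in>C. scale (c v) v)" using xC span_finite[OF finC] by blast
  define u where "u v = (if v \<in> A then a v else - c v)" for v
  have "(\<Sum>v\<in>A \<union> C. scale (u v) v) = (\<Sum>v\<in>A. scale (u v) v) + (\<Sum>v\<in>C. scale (u v) v)"
    by (rule sum.union_disjoint) (use finA finC disj in auto)
  also have "(\<Sum>v\<in>A. scale (u v) v) = x" unfolding a u_def by (rule sum.cong) auto
  also have "(\<Sum>v\<in>C. scale (u v) v) = (\<Sum>v\<in>C. - scale (c v) v)"
    unfolding u_def using disj by (intro sum.cong) (auto simp: scale_minus_left)
  also have "\<dots> = - x" unfolding c by (simp add: sum_negf)
  finally have "(\<Sum>v\<in>A \<union> C. scale (u v) v) = 0" by simp
  then have "u v = 0" if "v \<in> A" for v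
    using independentD[OF ind fin subset_refl] that by blast
  then have "\<forall>v\<in>A. a v = 0" by (simp add: u_def)
  then show ?thesis unfolding a by simp
qed

lemma dim_eq_dim_image_add_dim_kernel:
  assumes lin: "Vector_Spaces.linear scale scale f"
    and S: "subspace S" and W: "S \<subseteq> span W" "finite W"
  shows "dim S = dim (f ` S) + dim {x\<in>S. f x = 0}"
proof -
  interpret L: Vector_Spaces.linear scale scale f by (rule lin)
  let ?N = "{x\<in>S. f x = 0}"
  obtain BN where BN: "BN \<subseteq> ?N" "independent BN" "?N \<subseteq> span BN" "card BN = dim ?N"
    by (rule basis_exists)
  have "BN \<subseteq> S" using BN(1) by blast
  then obtain B where B: "BN \<subseteq> B" "B \<subseteq> S" "independent B" "S \<subseteq> span B"
    using maximal_independent_subset_extend[OF _ BN(2)] by blast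
  have finB: "finite B" using independent_span_bound[OF W(2) B(3)] B(2) W(1) by auto
  define C where "C = B - BN"
  have spanC: "span C \<subseteq> S" using B(2) S span_minimal unfolding C_def by blast
  \<comment> \<open>\<open>C\<close> extends a basis of the kernel to a basis of \<open>S\<close>, so \<open>f\<close> is injective on its span\<close>
  have "x = 0" if "x \<in> span C" "f x = 0" for x
  proof -
    have "x \<in> span BN" using that spanC BN(3) by auto
    moreover have "BN \<union> C = B" using B(1) C_def by auto
    ultimately show "x = 0"
      using span_inter_span_eq_0_if_independent[of BN C x] that B(3) finB C_def by auto
  qed
  then have inj: "inj_on f (span C)"
    using L.inj_on_iff_eq_0[OF subspace_span, of C] by simp
  have indC: "independent (f ` C)"
    using B(3) independent_mono L.independent_injective_image[OF _ inj] unfolding C_def by blast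
  have "f ` S \<subseteq> span (f ` C)"
  proof
    fix y assume "y \<in> f ` S"
    then have "y \<in> span (f ` B)" using B(4) L.span_image by auto
    moreover have "f ` B \<subseteq> insert 0 (f ` C)" using BN(1) C_def by auto
    ultimately show "y \<in> span (f ` C)"
      using span_mono[of "f ` B" "insert 0 (f ` C)"] by auto
  qed
  moreover have "f ` C \<subseteq> f ` S" using spanC span_superset by blast
  ultimately have "dim (f ` S) = card (f ` C)"
    using basis_card_eq_dim[of "f ` C" "f ` S", OF _ _ indC] by simp
  also have "\<dots> = card B - card BN"
    using card_image[OF inj_on_subset[OF inj span_superset]] B(1) finB
    unfolding C_def by (simp add: card_Diff_subset finite_subset)
  finally have "dim (f ` S) = card B - card BN" .
  moreover have "card BN \<le> card B" using B(1) finB card_mono by blast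
  ultimately show ?thesis using basis_card_eq_dim[OF B(2) B(4) B(3)] BN(4) by simp
qed

lemma dim_diff_eq_if_induced_iso:
  assumes lin: "Vector_Spaces.linear scale scale f"
    and Z: "subspace Z" and B: "subspace B" and BZ: "B \<subseteq> Z"
    and W: "Z \<subseteq> span W" "finite W"
    and fZ: "f ` Z = Z'" and fB: "f ` B = B'"
    and ker: "\<And>z. z \<in> Z \<Longrightarrow> f z = 0 \<Longrightarrow> z \<in> B"
  shows "dim Z - dim B = dim Z' - dim B'"
proof -
  have "{x\<in>Z. f x = 0} = {x\<in>B. f x = 0}" using BZ ker by auto
  then have "dim Z = dim Z' + dim {x\<in>B. f x = 0}"
    using dim_eq_dim_image_add_dim_kernel[OF lin Z W] fZ by simp
  moreover have "dim B = dim B' + dim {x\<in>B. f x = 0}"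
    using dim_eq_dim_image_add_dim_kernel[OF lin B _ W(2)] BZ W(1) fB by blast
  ultimately show ?thesis by simp
qed

end

section \<open>The chain complex of a family of faces\<close>

interpretation FS: vector_space "fscale :: 'k::field \<Rightarrow> (nat set \<Rightarrow> 'k) \<Rightarrow> (nat set \<Rightarrow> 'k)"
  by (rule vector_space_fscale)

definition insert_sign :: "nat \<Rightarrow> nat set \<Rightarrow> 'k::field" where
  "insert_sign v \<tau> = (-1) ^ card {u\<in>\<tau>. u < v}"

lemma insert_sign_square: "insert_sign v \<tau> * insert_sign v \<tau> = (1::'k::field)"
  by (simp add: insert_sign_def power_mult_distrib[symmetric])

lemma insert_sign_insert:
  assumes "finite \<tau>" "w \<notin> \<tau>" "w \<noteq> v"
  shows "insert_sign v (insert w \<tau>) = (insert_sign v \<tau> :: 'k::field) * (if w < v then -1 else 1)"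
proof -
  have "{u\<in>insert w \<tau>. u < v} = (if w < v then insert w {u\<in>\<tau>. u < v} else {u\<in>\<tau>. u < v})"
    by auto
  then show ?thesis using assms by (simp add: insert_sign_def)
qed

lemma insert_sign_swap:
  assumes "finite \<tau>" "w \<notin> \<tau>" "v \<notin> \<tau>" "w \<noteq> v"
  shows "(insert_sign w (insert v \<tau>) :: 'k::field) * insert_sign v \<tau>
       = - (insert_sign v (insert w \<tau>) * insert_sign w \<tau>)"
proof -
  have "w \<noteq> v" "v \<noteq> w" using assms(4) by auto
  show ?thesis
    unfolding insert_sign_insert[OF assms(1,2) \<open>w \<noteq> v\<close>] insert_sign_insert[OF assms(1,3) \<open>v \<noteq> w\<close>]
    using assms(4) by (cases "w < v") (auto simp: algebra_simps)
qed

lemma insert_sign_cross: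
  assumes "finite \<tau>" "w \<notin> \<tau>" "x \<notin> \<tau>" "w \<noteq> x"
  shows "(insert_sign w (insert x \<tau>) :: 'k::field) * insert_sign x (insert w \<tau>)
       = - (insert_sign x \<tau> * insert_sign w \<tau>)"
proof -
  have "w \<noteq> x" "x \<noteq> w" using assms(4) by auto
  show ?thesis
    unfolding insert_sign_insert[OF assms(1,2) \<open>w \<noteq> x\<close>] insert_sign_insert[OF assms(1,3) \<open>x \<noteq> w\<close>]
    using assms(4) by (cases "w < x") (auto simp: algebra_simps)
qed

lemma faces_iff: "\<sigma> \<in> faces K p \<longleftrightarrow> \<sigma> \<in> K \<and> finite \<sigma> \<and> int (card \<sigma>) = p + 1"
  by (simp add: faces_def)

lemma faces_subset: "faces K p \<subseteq> K"
  by (auto simp: faces_iff)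

lemma bd_eq: "bd K p c \<tau> = (if \<tau> \<in> faces K (p - 1)
   then (\<Sum>v\<in>{v. v \<notin> \<tau> \<and> insert v \<tau> \<in> faces K p}. insert_sign v \<tau> * c (insert v \<tau>)) else 0)"
  by (simp add: bd_def insert_sign_def)

lemma in_chainsD: "c \<in> chains K p \<Longrightarrow> c \<sigma> \<noteq> 0 \<Longrightarrow> \<sigma> \<in> faces K p"
  by (simp add: chains_def)

lemma in_chainsI: "(\<And>\<sigma>. c \<sigma> \<noteq> 0 \<Longrightarrow> \<sigma> \<in> faces K p) \<Longrightarrow> c \<in> chains K p"
  by (auto simp add: chains_def)

lemma chains_mono: "A \<subseteq> F \<Longrightarrow> chains A p \<subseteq> chains F p"
  by (auto simp: chains_def faces_iff)

lemma bd_chains: "bd K p c \<in> chains K (p - 1)"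
  by (rule in_chainsI) (simp add: bd_eq split: if_splits)

lemma bd_chains': "bd K (p + 1) c \<in> chains K p"
  using bd_chains[of K "p + 1" c] by simp

lemma bd_add: "bd K p (c + d) = bd K p c + bd K p d"
  by (simp add: fun_eq_iff bd_eq sum.distrib distrib_left)

lemma bd_scale: "bd K p (fscale a c) = fscale a (bd K p c)"
  by (simp add: fun_eq_iff bd_eq sum_distrib_left algebra_simps)

lemma bd_diff: "bd K p (c - d) = bd K p c - bd K p d"
  by (simp add: fun_eq_iff bd_eq sum_subtractf right_diff_distrib)

lemma bd_zero [simp]: "bd K p 0 = 0"
  by (simp add: fun_eq_iff bd_eq)

lemma linear_bd: "Vector_Spaces.linear (fscale::'k::field\<Rightarrow>_) fscale (bd K p)"
  unfolding Vector_Spaces.linear_iff by (intro conjI vector_space_fscale allI bd_add bd_scale)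

lemma subspace_chains: "FS.subspace (chains K p)"
proof -
  have "c + d \<in> chains K p" if "c \<in> chains K p" "d \<in> chains K p" for c d
    using that by (intro in_chainsI) (metis add.right_neutral in_chainsD plus_fun_apply)
  then show ?thesis unfolding FS.subspace_def by (auto simp: chains_def)
qed

lemma subspace_cycles: "FS.subspace (cycles K p)"
  using subspace_chains[of K p]
  unfolding FS.subspace_def cycles_def by (auto simp: bd_add bd_scale)

lemma subspace_boundaries: "FS.subspace (boundaries K p)"
proof -
  interpret L: Vector_Spaces.linear "fscale::'a::field\<Rightarrow>_" fscale "bd K (p + 1)"
    by (rule linear_bd)
  show ?thesis unfolding boundaries_def by (rule L.subspace_image[OF subspace_chains])
qed

lemma zero_in_boundaries: "0 \<in> boundaries K p"
  using subspace_chains[of K "p + 1"] FS.subspace_0 by (force simp: boundaries_def)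

lemma sum_fun_apply: "(sum f A) x = (\<Sum>a\<in>A. f a x)"
  by (induction A rule: infinite_finite_induct) auto

lemma chains_subset_finite_span:
  assumes "finite K"
  obtains W where "finite W" "chains K p \<subseteq> FS.span (W :: (nat set \<Rightarrow> 'k::field) set)"
proof
  let ?\<delta> = "\<lambda>\<sigma> x. if x = \<sigma> then 1 else (0::'k)"
  show "finite (?\<delta> ` faces K p)" using assms by (simp add: faces_def)
  show "chains K p \<subseteq> FS.span (?\<delta> ` faces K p)"
  proof
    fix c :: "nat set \<Rightarrow> 'k" assume c: "c \<in> chains K p"
    have "c = (\<Sum>\<sigma>\<in>faces K p. fscale (c \<sigma>) (?\<delta> \<sigma>))"
    proof
      fix x
      have "(\<Sum>\<sigma>\<in>faces K p. fscale (c \<sigma>) (?\<delta> \<sigma>)) x = (\<Sum>\<sigma>\<in>faces K p. c \<sigma> * ?\<delta> \<sigma> x)"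
        by (simp add: sum_fun_apply)
      also have "\<dots> = (if x \<in> faces K p then c x else 0)"
        using assms by (simp add: faces_def if_distrib cong: if_cong)
      also have "\<dots> = c x" using in_chainsD[OF c, of x] by auto
      finally show "c x = (\<Sum>\<sigma>\<in>faces K p. fscale (c \<sigma>) (?\<delta> \<sigma>)) x" by simp
    qed
    also have "\<dots> \<in> FS.span (?\<delta> ` faces K p)"
      by (intro FS.span_sum FS.span_scale FS.span_base) auto
    finally show "c \<in> FS.span (?\<delta> ` faces K p)" .
  qed
qed

definition finite_family :: "nat set set \<Rightarrow> bool" where
  "finite_family F \<longleftrightarrow> finite F \<and> (\<forall>\<sigma>\<in>F. finite \<sigma>)"

text \<open>Convex families are exactly the relative complexes \<open>K - L\<close> with \<open>L \<subseteq> K\<close> simplicial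
  complexes, and \<open>bd\<close> is then the relative boundary operator.\<close>

definition convex_family :: "nat set set \<Rightarrow> bool" where
  "convex_family F \<longleftrightarrow> (\<forall>\<rho> \<sigma> \<tau>. \<rho> \<in> F \<longrightarrow> \<sigma> \<in> F \<longrightarrow> \<rho> \<subseteq> \<tau> \<longrightarrow> \<tau> \<subseteq> \<sigma> \<longrightarrow> \<tau> \<in> F)"

lemma finite_family_Union: "finite_family F \<Longrightarrow> finite (\<Union>F)"
  by (simp add: finite_family_def)

lemma finite_family_subset: "finite_family F \<Longrightarrow> A \<subseteq> F \<Longrightarrow> finite_family A"
  by (auto simp: finite_family_def intro: finite_subset)

text \<open>Pairing each term with its negative, instead of using \<open>S = - S\<close>, keeps this valid in
  characteristic two.\<close>

lemma sum_antisymmetric_pairs_eq_0: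
  fixes T :: "'a::linorder \<Rightarrow> 'a \<Rightarrow> 'b::ab_group_add"
  assumes fin: "finite P" and sym: "\<And>w v. (w, v) \<in> P \<Longrightarrow> (v, w) \<in> P"
    and neq: "\<And>w v. (w, v) \<in> P \<Longrightarrow> w \<noteq> v"
    and anti: "\<And>w v. (w, v) \<in> P \<Longrightarrow> T v w = - T w v"
  shows "(\<Sum>(w, v)\<in>P. T w v) = 0"
proof -
  define P1 where "P1 = {x\<in>P. fst x < snd x}"
  have P: "P = P1 \<union> prod.swap ` P1"
  proof (intro equalityI subsetI)
    fix x assume "x \<in> P"
    then show "x \<in> P1 \<union> prod.swap ` P1"
      using sym neq[of "fst x" "snd x"] unfolding P1_def
      by (cases x) (auto simp: image_iff linorder_neq_iff)
  qed (use sym in \<open>auto simp: P1_def\<close>)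
  have "(\<Sum>(w, v)\<in>prod.swap ` P1. T w v) = (\<Sum>(w, v)\<in>P1. T v w)"
    by (subst sum.reindex) (auto simp: case_prod_unfold)
  also have "\<dots> = - (\<Sum>(w, v)\<in>P1. T w v)"
    by (auto simp: P1_def anti sum_negf[symmetric] case_prod_unfold intro!: sum.cong)
  finally have "(\<Sum>(w, v)\<in>prod.swap ` P1. T w v) = - (\<Sum>(w, v)\<in>P1. T w v)" .
  moreover have "P1 \<inter> prod.swap ` P1 = {}" by (auto simp: P1_def)
  moreover have "finite P1" using fin by (simp add: P1_def)
  ultimately show ?thesis by (subst P, subst sum.union_disjoint) auto
qed

lemma bd_bd:
  assumes fin: "finite_family F" and cv: "convex_family F"
  shows "bd F (p - 1) (bd F p c) = (0 :: nat set \<Rightarrow> 'k::field)"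
proof
  fix \<rho>
  show "bd F (p - 1) (bd F p c) \<rho> = (0 :: nat set \<Rightarrow> 'k) \<rho>"
  proof (cases "\<rho> \<in> faces F (p - 1 - 1)")
    case False
    then show ?thesis by (simp add: bd_eq)
  next
    case True
    then have \<rho>F: "\<rho> \<in> F" and fr: "finite \<rho>" and cr: "int (card \<rho>) = p - 1"
      by (auto simp: faces_iff)
    define W where "W = {w. w \<notin> \<rho> \<and> insert w \<rho> \<in> faces F (p - 1)}"
    define V where "V w = {v. v \<notin> insert w \<rho> \<and> insert v (insert w \<rho>) \<in> faces F p}" for w
    define T where
      "T w v = insert_sign w \<rho> * (insert_sign v (insert w \<rho>) * c (insert v (insert w \<rho>)))"
      for w v
    define P where "P = {(w, v). w \<notin> \<rho> \<and> v \<notin> \<rho> \<and> w \<noteq> v \<and> insert v (insert w \<rho>) \<in> F}"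
    have UF: "finite (\<Union>F)" using finite_family_Union[OF fin] .
    have finW: "finite W" by (rule finite_subset[OF _ UF]) (auto simp: W_def faces_iff)
    have finV: "finite (V w)" for w by (rule finite_subset[OF _ UF]) (auto simp: V_def faces_iff)
    have "bd F (p - 1) (bd F p c) \<rho> = (\<Sum>w\<in>W. \<Sum>v\<in>V w. T w v)"
      using True by (auto simp: bd_eq W_def V_def T_def sum_distrib_left intro!: sum.cong)
    also have "\<dots> = (\<Sum>(w, v)\<in>Sigma W V. T w v)"
      by (rule sum.Sigma[OF finW]) (use finV in auto)
    also have "Sigma W V = P"
    proof
      show "Sigma W V \<subseteq> P" by (auto simp: W_def V_def P_def faces_iff)
      show "P \<subseteq> Sigma W V"
      proof
        fix x assume "x \<in> P"
        then obtain w v where x: "x = (w, v)" "w \<notin> \<rho>" "v \<notin> \<rho>" "w \<noteq> v"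
          "insert v (insert w \<rho>) \<in> F" unfolding P_def by auto
        \<comment> \<open>convexity supplies the intermediate face\<close>
        have "insert w \<rho> \<in> F"
          using cv \<rho>F x(5) unfolding convex_family_def by (meson subset_insertI)
        then show "x \<in> Sigma W V" using x fr cr by (auto simp: W_def V_def faces_iff)
      qed
    qed
    also have "(\<Sum>(w, v)\<in>P. T w v) = 0"
    proof (rule sum_antisymmetric_pairs_eq_0)
      have "P \<subseteq> (\<Union>F) \<times> (\<Union>F)" unfolding P_def by auto
      then show "finite P" using UF finite_subset by blast
      show "(v, w) \<in> P" if "(w, v) \<in> P" for w v
        using that unfolding P_def by (auto simp: insert_commute)
      show "w \<noteq> v" if "(w, v) \<in> P" for w v using that unfolding P_def by auto
      show "T v w = - T w v" if "(w, v) \<in> P" for w v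
      proof -
        have "w \<notin> \<rho>" "v \<notin> \<rho>" "w \<noteq> v" using that unfolding P_def by auto
        then have s: "insert_sign w (insert v \<rho>) * insert_sign v \<rho>
                 = - (insert_sign v (insert w \<rho>) * (insert_sign w \<rho> :: 'k))"
          by (rule insert_sign_swap[OF fr])
        have "T v w = (insert_sign w (insert v \<rho>) * insert_sign v \<rho>) * c (insert v (insert w \<rho>))"
          unfolding T_def by (simp add: insert_commute algebra_simps)
        also have "\<dots> = - T w v" unfolding s T_def by (simp add: algebra_simps)
        finally show ?thesis .
      qed
    qed
    finally show ?thesis by simp
  qed
qed

lemma boundaries_subset_cycles:
  assumes "finite_family F" "convex_family F"
  shows "boundaries F p \<subseteq> (cycles F p :: (_ \<Rightarrow> 'k::field) set)"
  using bd_chains'[of F p] bd_bd[OF assms, of "p + 1"] by (auto simp: boundaries_def cycles_def)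

lemma rhom_dim_eq_if_induced_iso:
  fixes f :: "(nat set \<Rightarrow> 'k::field) \<Rightarrow> (nat set \<Rightarrow> 'k)"
  assumes lin: "Vector_Spaces.linear (fscale::'k\<Rightarrow>_) fscale f"
    and fin: "finite_family F" and cv: "convex_family F"
    and cyc: "f ` cycles F p = cycles G q" and bdry: "f ` boundaries F p = boundaries G q"
    and ker: "\<And>z. z \<in> cycles F p \<Longrightarrow> f z = 0 \<Longrightarrow> z \<in> boundaries F p"
  shows "rhom_dim TYPE('k) F p = rhom_dim TYPE('k) G q"
proof -
  obtain W where W: "finite W" "chains F p \<subseteq> FS.span (W :: (_ \<Rightarrow> 'k) set)"
    using chains_subset_finite_span fin unfolding finite_family_def by blast
  have "cycles F p \<subseteq> FS.span W" using W(2) by (auto simp: cycles_def)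
  then show ?thesis unfolding rhom_dim_def
    by (rule FS.dim_diff_eq_if_induced_iso[OF lin subspace_cycles subspace_boundaries
          boundaries_subset_cycles[OF fin cv] _ W(1) cyc bdry ker])
qed

section \<open>Cones are acyclic\<close>

locale cone_family =
  fixes A :: "nat set set" and x :: nat
  assumes finite_family: "finite_family A"
    and insert_apex: "\<sigma> \<in> A \<Longrightarrow> insert x \<sigma> \<in> A"
    and remove_apex: "\<sigma> \<in> A \<Longrightarrow> \<sigma> - {x} \<in> A"
begin

definition cone_chain :: "(nat set \<Rightarrow> 'k::field) \<Rightarrow> nat set \<Rightarrow> 'k" where
  "cone_chain c = (\<lambda>\<sigma>. if \<sigma> \<in> A \<and> x \<in> \<sigma> then insert_sign x (\<sigma> - {x}) * c (\<sigma> - {x}) else 0)"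

lemma finite_face: "\<sigma> \<in> A \<Longrightarrow> finite \<sigma>"
  using finite_family by (simp add: finite_family_def)

lemma linear_cone_chain: "Vector_Spaces.linear (fscale::'k::field\<Rightarrow>_) fscale cone_chain"
  unfolding Vector_Spaces.linear_iff
  by (intro conjI vector_space_fscale allI) (auto simp: cone_chain_def fun_eq_iff algebra_simps)

lemma cone_chain_0 [simp]: "cone_chain 0 = (0 :: _ \<Rightarrow> 'k::field)"
  by (simp add: cone_chain_def fun_eq_iff)

lemma card_remove_apex: "\<sigma> \<in> A \<Longrightarrow> x \<in> \<sigma> \<Longrightarrow> int (card (\<sigma> - {x})) = int (card \<sigma>) - 1"
  using card_Suc_Diff1[OF finite_face] by fastforce

lemma cone_chain_chains:
  assumes c: "c \<in> chains A p"
  shows "cone_chain c \<in> chains A (p + 1)"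
proof (rule in_chainsI)
  fix \<sigma> assume "cone_chain c \<sigma> \<noteq> 0"
  then have \<sigma>: "\<sigma> \<in> A" "x \<in> \<sigma>" "c (\<sigma> - {x}) \<noteq> 0"
    by (auto simp: cone_chain_def split: if_splits)
  then have "\<sigma> - {x} \<in> faces A p" using in_chainsD[OF c] by blast
  then show "\<sigma> \<in> faces A (p + 1)"
    using \<sigma> card_remove_apex finite_face by (auto simp: faces_iff)
qed

lemma bd_cone_chain_apex_free:
  assumes \<sigma>: "\<sigma> \<in> faces A p" "x \<notin> \<sigma>"
  shows "bd A (p + 1) (cone_chain c) \<sigma> = (c \<sigma> :: 'k::field)"
proof -
  have \<sigma>A: "\<sigma> \<in> A" and c\<sigma>: "int (card \<sigma>) = p + 1" using \<sigma>(1) by (auto simp: faces_iff)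
  define I where "I = {w. w \<notin> \<sigma> \<and> insert w \<sigma> \<in> faces A (p + 1)}"
  have "finite I"
    by (rule finite_subset[OF _ finite_family_Union[OF finite_family]]) (auto simp: I_def faces_iff)
  moreover have "x \<in> I"
    using \<sigma> insert_apex[OF \<sigma>A] finite_face[OF \<sigma>A] c\<sigma> by (auto simp: I_def faces_iff)
  moreover have "insert_sign w \<sigma> * cone_chain c (insert w \<sigma>) = (if w = x then c \<sigma> else 0)"
    if "w \<in> I" for w
  proof (cases "w = x")
    case True
    have "insert x \<sigma> - {x} = \<sigma>" using \<sigma>(2) by auto
    then show ?thesis using True insert_apex[OF \<sigma>A]
      by (simp add: cone_chain_def insert_sign_square mult.assoc[symmetric])
  qed (use \<sigma>(2) in \<open>simp add: cone_chain_def\<close>)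
  ultimately have "(\<Sum>w\<in>I. insert_sign w \<sigma> * cone_chain c (insert w \<sigma>)) = c \<sigma>"
    by (simp cong: sum.cong)
  then show ?thesis using \<sigma>(1) by (simp add: bd_eq I_def)
qed

lemma cofaces_insert_apex:
  assumes \<sigma>: "insert x \<rho> \<in> faces A p" and x: "x \<notin> \<rho>"
  shows "{w. w \<notin> insert x \<rho> \<and> insert w (insert x \<rho>) \<in> faces A (p + 1)}
       = {w. w \<notin> \<rho> \<and> insert w \<rho> \<in> faces A p} - {x}"
proof -
  have "finite \<rho>" "int (card (insert x \<rho>)) = p + 1" using \<sigma> by (auto simp: faces_iff)
  moreover have "insert w (insert x \<rho>) \<in> A \<longleftrightarrow> insert w \<rho> \<in> A" if "w \<noteq> x" for w
    using insert_apex[of "insert w \<rho>"] remove_apex[of "insert w (insert x \<rho>)"] that x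
    by (auto simp: insert_commute insert_Diff_if)
  ultimately show ?thesis using x by (auto simp: faces_iff)
qed

lemma bd_cone_chain_apex:
  assumes \<sigma>: "\<sigma> \<in> faces A p" "x \<in> \<sigma>"
  shows "bd A (p + 1) (cone_chain c) \<sigma> + cone_chain (bd A p c) \<sigma> = (c \<sigma> :: 'k::field)"
proof -
  define \<rho> where "\<rho> = \<sigma> - {x}"
  have \<sigma>A: "\<sigma> \<in> A" and c\<sigma>: "int (card \<sigma>) = p + 1" using \<sigma>(1) by (auto simp: faces_iff)
  have \<sigma>\<rho>: "\<sigma> = insert x \<rho>" and x\<rho>: "x \<notin> \<rho>" using \<sigma>(2) by (auto simp: \<rho>_def)
  have f\<rho>: "finite \<rho>" using finite_face[OF \<sigma>A] by (simp add: \<rho>_def)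
  have \<rho>F: "\<rho> \<in> faces A (p - 1)"
    using remove_apex[OF \<sigma>A] c\<sigma> card_remove_apex[OF \<sigma>A \<sigma>(2)] f\<rho> by (simp add: faces_iff \<rho>_def)
  define J where "J = {w. w \<notin> \<rho> \<and> insert w \<rho> \<in> faces A p}"
  define S where "S = (\<Sum>w\<in>J - {x}. insert_sign x \<rho> * (insert_sign w \<rho> * c (insert w \<rho>)))"
  have finJ: "finite J"
    by (rule finite_subset[OF _ finite_family_Union[OF finite_family]]) (auto simp: J_def faces_iff)
  have xJ: "x \<in> J" using x\<rho> \<sigma>\<rho> \<sigma>(1) by (auto simp: J_def)
  have IJ: "{w. w \<notin> \<sigma> \<and> insert w \<sigma> \<in> faces A (p + 1)} = J - {x}"
    using cofaces_insert_apex[of \<rho> p] \<sigma>(1) \<sigma>\<rho> x\<rho> by (simp add: J_def)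
  have "cone_chain (bd A p c) \<sigma> = insert_sign x \<rho> * (\<Sum>w\<in>J. insert_sign w \<rho> * c (insert w \<rho>))"
    using \<sigma>A \<sigma>(2) \<rho>F by (simp add: cone_chain_def bd_eq J_def \<rho>_def[symmetric])
  also have "\<dots> = insert_sign x \<rho> * (insert_sign x \<rho> * c \<sigma>) + S"
    by (simp add: sum.remove[OF finJ xJ] distrib_left sum_distrib_left \<sigma>\<rho> S_def)
  finally have cone_bd: "cone_chain (bd A p c) \<sigma> = c \<sigma> + S"
    by (simp add: insert_sign_square mult.assoc[symmetric])
  have "bd A (p + 1) (cone_chain c) \<sigma> = (\<Sum>w\<in>J - {x}. insert_sign w \<sigma> * cone_chain c (insert w \<sigma>))"
    using \<sigma>(1) by (simp add: bd_eq IJ)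
  also have "\<dots> = (\<Sum>w\<in>J - {x}. insert_sign w \<sigma> * (insert_sign x (insert w \<rho>) * c (insert w \<rho>)))"
  proof (rule sum.cong[OF refl])
    fix w assume w: "w \<in> J - {x}"
    then have "insert w \<sigma> - {x} = insert w \<rho>" using \<sigma>\<rho> x\<rho> by auto
    then show "insert_sign w \<sigma> * cone_chain c (insert w \<sigma>)
        = insert_sign w \<sigma> * (insert_sign x (insert w \<rho>) * c (insert w \<rho>))"
      using w IJ \<sigma>(2) by (auto simp: cone_chain_def faces_iff)
  qed
  also have "\<dots> = - S"
  proof -
    have "insert_sign w \<sigma> * (insert_sign x (insert w \<rho>) * c (insert w \<rho>))
        = - (insert_sign x \<rho> * (insert_sign w \<rho> * c (insert w \<rho>)))" if "w \<in> J - {x}" for w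
    proof -
      have "w \<notin> \<rho>" "w \<noteq> x" using that by (auto simp: J_def)
      then have "(insert_sign w \<sigma> :: 'k) * insert_sign x (insert w \<rho>)
          = - (insert_sign x \<rho> * insert_sign w \<rho>)"
        unfolding \<sigma>\<rho> by (rule insert_sign_cross[OF f\<rho> _ x\<rho>])
      then show ?thesis by (metis minus_mult_left mult.assoc)
    qed
    then show ?thesis unfolding S_def sum_negf[symmetric] by (rule sum.cong[OF refl])
  qed
  finally show ?thesis using cone_bd by simp
qed

lemma bd_cone_chain_add_cone_chain_bd:
  assumes c: "c \<in> chains A p"
  shows "bd A (p + 1) (cone_chain c) + cone_chain (bd A p c) = (c :: _ \<Rightarrow> 'k::field)"
proof
  fix \<sigma>
  show "(bd A (p + 1) (cone_chain c) + cone_chain (bd A p c)) \<sigma> = c \<sigma>"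
  proof (cases "\<sigma> \<in> faces A p")
    case False
    have "\<sigma> - {x} \<notin> faces A (p - 1)" if "\<sigma> \<in> A" "x \<in> \<sigma>"
      using False that card_remove_apex finite_face by (auto simp: faces_iff)
    then have "cone_chain (bd A p c) \<sigma> = 0" by (auto simp: cone_chain_def bd_eq)
    then show ?thesis using False in_chainsD[OF c, of \<sigma>] by (auto simp: bd_eq)
  next
    case True
    show ?thesis
    proof (cases "x \<in> \<sigma>")
      case False
      then have "cone_chain (bd A p c) \<sigma> = 0" by (simp add: cone_chain_def)
      then show ?thesis using bd_cone_chain_apex_free[OF True False] by simp
    qed (use bd_cone_chain_apex[OF True] in simp)
  qed
qed

lemma cycles_subset_boundaries: "cycles A p \<subseteq> (boundaries A p :: (_ \<Rightarrow> 'k::field) set)"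
proof
  fix z :: "_ \<Rightarrow> 'k" assume "z \<in> cycles A p"
  then have "z \<in> chains A p" "bd A p z = 0" by (auto simp: cycles_def)
  then have "z = bd A (p + 1) (cone_chain z)"
    using bd_cone_chain_add_cone_chain_bd[of z p] by simp
  then show "z \<in> boundaries A p"
    unfolding boundaries_def using cone_chain_chains[OF \<open>z \<in> chains A p\<close>] by blast
qed

lemma rhom_dim_eq_0:
  assumes "convex_family A"
  shows "rhom_dim TYPE('k::field) A p = 0"
proof -
  have "cycles A p = (boundaries A p :: (_ \<Rightarrow> 'k) set)"
    using cycles_subset_boundaries boundaries_subset_cycles[OF finite_family assms] by blast
  then show ?thesis by (simp add: rhom_dim_def)
qed

end

section \<open>Removing an acyclic lower or upper part\<close>

definition restrict_chain :: "nat set set \<Rightarrow> (nat set \<Rightarrow> 'k::zero) \<Rightarrow> nat set \<Rightarrow> 'k" where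
  "restrict_chain X c = (\<lambda>\<sigma>. if \<sigma> \<in> X then c \<sigma> else 0)"

lemma restrict_chain_chains: "c \<in> chains F p \<Longrightarrow> restrict_chain B c \<in> chains B p"
  by (rule in_chainsI) (auto simp: restrict_chain_def faces_iff split: if_splits dest: in_chainsD)

lemma restrict_chain_id: "c \<in> chains B p \<Longrightarrow> restrict_chain B c = c"
  by (auto simp: restrict_chain_def fun_eq_iff faces_iff dest: in_chainsD)

lemma restrict_chain_disjoint:
  assumes "c \<in> chains A p" "A \<inter> B = {}"
  shows "restrict_chain B c = 0"
  using assms faces_subset by (auto simp: restrict_chain_def fun_eq_iff dest!: in_chainsD)

lemma restrict_chain_eq_0_chains:
  assumes "c \<in> chains F p" "restrict_chain B c = 0"
  shows "c \<in> chains (F - B) p"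
proof (rule in_chainsI)
  fix \<sigma> assume "c \<sigma> \<noteq> 0"
  moreover from this have "\<sigma> \<notin> B"
    using fun_cong[OF assms(2), of \<sigma>] by (simp add: restrict_chain_def split: if_splits)
  ultimately show "\<sigma> \<in> faces (F - B) p" using in_chainsD[OF assms(1)] by (auto simp: faces_iff)
qed

lemma restrict_chain_diff:
  "restrict_chain B (c - d) = restrict_chain B c - restrict_chain B (d :: _ \<Rightarrow> 'k::ab_group_add)"
  by (simp add: restrict_chain_def fun_eq_iff)

lemma restrict_chain_0 [simp]: "restrict_chain B 0 = (0 :: _ \<Rightarrow> 'k::comm_monoid_add)"
  by (simp add: restrict_chain_def fun_eq_iff)

lemma linear_restrict_chain: "Vector_Spaces.linear (fscale::'k::field\<Rightarrow>_) fscale (restrict_chain B)"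
  unfolding Vector_Spaces.linear_iff
  by (intro conjI vector_space_fscale allI) (simp_all add: restrict_chain_def fun_eq_iff)

text \<open>The setting of the long exact sequence of the pair \<open>(F, A)\<close>: \<open>A\<close> is closed under taking
  faces within \<open>F\<close>, hence \<open>F - A\<close> under taking cofaces. If \<open>A\<close> is acyclic, or \<open>F - A\<close> is a
  cone, the other part carries the homology of \<open>F\<close>.\<close>

locale family_split =
  fixes F A :: "nat set set"
  assumes finite_family: "finite_family F" and convex_family: "convex_family F"
    and lower_subset: "A \<subseteq> F"
    and lower_closed: "\<sigma> \<in> A \<Longrightarrow> \<tau> \<in> F \<Longrightarrow> \<tau> \<subseteq> \<sigma> \<Longrightarrow> \<tau> \<in> A"
begin

lemma bd_lower:
  assumes c: "c \<in> chains A p"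
  shows "bd F p c = bd A p c"
proof
  fix \<tau>
  define IF where "IF = {v. v \<notin> \<tau> \<and> insert v \<tau> \<in> faces F p}"
  define IA where "IA = {v. v \<notin> \<tau> \<and> insert v \<tau> \<in> faces A p}"
  have vanish: "c (insert v \<tau>) = 0" if "insert v \<tau> \<notin> A" for v
    using that in_chainsD[OF c] faces_subset by blast
  show "bd F p c \<tau> = bd A p c \<tau>"
  proof (cases "\<tau> \<in> faces A (p - 1)")
    case True
    have "finite IF"
      by (rule finite_subset[OF _ finite_family_Union[OF finite_family]])
        (auto simp: IF_def faces_iff)
    moreover have "IA \<subseteq> IF" using lower_subset by (auto simp: IA_def IF_def faces_iff)
    moreover have "\<forall>v\<in>IF - IA. insert_sign v \<tau> * c (insert v \<tau>) = 0"
      using vanish by (auto simp: IA_def IF_def faces_iff)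
    moreover have "\<tau> \<in> faces F (p - 1)" using True lower_subset by (auto simp: faces_iff)
    ultimately show ?thesis
      using True by (simp add: bd_eq IA_def[symmetric] IF_def[symmetric] sum.mono_neutral_right)
  next
    case False
    have "c (insert v \<tau>) = 0" if "\<tau> \<in> faces F (p - 1)" for v
      using False that lower_closed[of "insert v \<tau>" \<tau>] vanish by (auto simp: faces_iff)
    then show ?thesis using False by (simp add: bd_eq)
  qed
qed

lemma bd_upper: "bd (F - A) p (restrict_chain (F - A) c) = restrict_chain (F - A) (bd F p c)"
proof
  fix \<tau>
  show "bd (F - A) p (restrict_chain (F - A) c) \<tau> = restrict_chain (F - A) (bd F p c) \<tau>"
  proof (cases "\<tau> \<in> F - A")
    case True
    then have up: "insert v \<tau> \<in> F - A" if "insert v \<tau> \<in> F" for v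
      using that lower_closed[of "insert v \<tau>" \<tau>] by blast
    have eqf: "\<tau> \<in> faces (F - A) (p - 1) \<longleftrightarrow> \<tau> \<in> faces F (p - 1)"
      using True by (auto simp: faces_iff)
    have eqI: "{v. v \<notin> \<tau> \<and> insert v \<tau> \<in> faces (F - A) p} = {v. v \<notin> \<tau> \<and> insert v \<tau> \<in> faces F p}"
      using up by (auto simp: faces_iff)
    have "bd (F - A) p (restrict_chain (F - A) c) \<tau> = (if \<tau> \<in> faces F (p - 1)
        then \<Sum>v\<in>{v. v \<notin> \<tau> \<and> insert v \<tau> \<in> faces F p}. insert_sign v \<tau> * c (insert v \<tau>) else 0)"
      unfolding bd_eq eqf eqI
      by (intro if_cong refl sum.cong) (use up in \<open>auto simp: restrict_chain_def faces_iff\<close>)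
    also have "\<dots> = restrict_chain (F - A) (bd F p c) \<tau>"
      using True by (simp add: restrict_chain_def bd_eq)
    finally show ?thesis .
  qed (use faces_subset[of "F - A" "p - 1"] in \<open>auto simp: bd_eq restrict_chain_def\<close>)
qed

lemma bd_bd': "bd F p (bd F (p + 1) c) = 0"
  using bd_bd[OF finite_family convex_family, of "p + 1" c] by simp

lemma lower_cycles_subset: "cycles A p \<subseteq> cycles F p"
  using chains_mono[OF lower_subset] by (auto simp: cycles_def bd_lower)

lemma lower_boundaries_subset: "boundaries A p \<subseteq> boundaries F p"
  using chains_mono[OF lower_subset] by (auto simp: boundaries_def bd_lower[symmetric])

lemma restrict_upper_boundaries: "restrict_chain (F - A) ` boundaries F p = boundaries (F - A) p"
proof -
  have "restrict_chain (F - A) (bd F (p + 1) c) = bd (F - A) (p + 1) (restrict_chain (F - A) c)"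
    for c
    by (simp add: bd_upper)
  moreover have "bd (F - A) (p + 1) c = restrict_chain (F - A) (bd F (p + 1) c)"
    if "c \<in> chains (F - A) (p + 1)" for c
    using bd_upper[of "p + 1" c] restrict_chain_id[OF that] by simp
  ultimately show ?thesis
    using chains_mono[of "F - A" F] restrict_chain_chains[of _ F "p + 1" "F - A"]
    unfolding boundaries_def by (force simp: image_iff)
qed

end

context family_split
begin

lemma Diff_Diff_lower: "F - (F - A) = A"
  using lower_subset by blast

lemma restrict_upper_cycles:
  assumes acyclic: "cycles A (p - 1) \<subseteq> (boundaries A (p - 1) :: (_ \<Rightarrow> 'k::field) set)"
  shows "restrict_chain (F - A) ` cycles F p = (cycles (F - A) p :: (_ \<Rightarrow> 'k) set)"
proof
  show "restrict_chain (F - A) ` cycles F p \<subseteq> (cycles (F - A) p :: (_ \<Rightarrow> 'k) set)"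
  proof
    fix y :: "_ \<Rightarrow> 'k" assume "y \<in> restrict_chain (F - A) ` cycles F p"
    then obtain z where "z \<in> chains F p" "bd F p z = 0" "y = restrict_chain (F - A) z"
      by (auto simp: cycles_def)
    then show "y \<in> cycles (F - A) p"
      using restrict_chain_chains bd_upper[of p z] by (simp add: cycles_def)
  qed
  show "cycles (F - A) p \<subseteq> restrict_chain (F - A) ` (cycles F p :: (_ \<Rightarrow> 'k) set)"
  proof
    fix z' :: "_ \<Rightarrow> 'k" assume "z' \<in> cycles (F - A) p"
    then have z': "z' \<in> chains (F - A) p" "bd (F - A) p z' = 0" by (auto simp: cycles_def)
    have z'F: "z' \<in> chains F p" using z'(1) chains_mono[of "F - A" F] by blast
    define y where "y = bd F p z'"
    \<comment> \<open>the boundary of \<open>z'\<close> in \<open>F\<close> lives on \<open>A\<close>, where it is a cycle, hence a boundary\<close>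
    have "restrict_chain (F - A) y = 0"
      unfolding y_def using bd_upper[of p z'] restrict_chain_id[OF z'(1)] z'(2) by simp
    then have yA: "y \<in> chains A (p - 1)"
      using restrict_chain_eq_0_chains[OF bd_chains[of F p z'], of "F - A"]
        by (simp add: y_def Diff_Diff_lower)
    have "bd A (p - 1) y = 0"
      using bd_lower[OF yA] bd_bd[OF finite_family convex_family, of p z'] by (simp add: y_def)
    then have "y \<in> boundaries A (p - 1)" using yA acyclic by (auto simp: cycles_def)
    then obtain a where a: "a \<in> chains A p" "y = bd A p a" by (auto simp: boundaries_def)
    have "z' - a \<in> chains F p"
      using z'F a(1) chains_mono[OF lower_subset] FS.subspace_diff[OF subspace_chains] by blast
    moreover have "bd F p (z' - a) = 0"
      unfolding bd_diff bd_lower[OF a(1)] a(2)[symmetric] y_def by simp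
    ultimately have "z' - a \<in> cycles F p" by (simp add: cycles_def)
    moreover have "restrict_chain (F - A) (z' - a) = z'"
      using restrict_chain_disjoint[OF a(1)] restrict_chain_id[OF z'(1)]
        by (simp add: restrict_chain_diff)
    ultimately show "z' \<in> restrict_chain (F - A) ` cycles F p" by force
  qed
qed

lemma restrict_upper_eq_0_boundary:
  fixes z :: "nat set \<Rightarrow> 'k::field"
  assumes acyclic: "cycles A p \<subseteq> (boundaries A p :: (_ \<Rightarrow> 'k) set)"
    and z: "z \<in> cycles F p" "restrict_chain (F - A) z = 0"
  shows "z \<in> boundaries F p"
proof -
  have zA: "z \<in> chains A p"
    using restrict_chain_eq_0_chains[of z F p "F - A"] z by (auto simp: cycles_def Diff_Diff_lower)
  then have "z \<in> cycles A p" using z(1) by (auto simp: cycles_def bd_lower)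
  then have "z \<in> boundaries A p" using acyclic by blast
  then show ?thesis using lower_boundaries_subset by blast
qed

theorem rhom_dim_remove_acyclic_lower:
  assumes acyclic: "\<And>q. cycles A q \<subseteq> (boundaries A q :: (_ \<Rightarrow> 'k::field) set)"
  shows "rhom_dim TYPE('k) F p = rhom_dim TYPE('k) (F - A) p"
  by (rule rhom_dim_eq_if_induced_iso[OF linear_restrict_chain finite_family convex_family
        restrict_upper_cycles[OF acyclic] restrict_upper_boundaries
        restrict_upper_eq_0_boundary[OF acyclic]])

end

locale family_split_upper_cone = family_split F A + upper: cone_family "F - A" x
  for F A :: "nat set set" and x :: nat
begin

text \<open>Subtracting the boundary of the cone over the upper part of a cycle leaves a cycle of \<open>A\<close>.\<close>

definition retract :: "int \<Rightarrow> (nat set \<Rightarrow> 'k::field) \<Rightarrow> nat set \<Rightarrow> 'k" where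
  "retract p z = z - bd F (p + 1) (upper.cone_chain (restrict_chain (F - A) z))"

lemma linear_retract: "Vector_Spaces.linear (fscale::'k::field\<Rightarrow>_) fscale (retract p)"
proof -
  interpret cone: Vector_Spaces.linear "fscale::'k\<Rightarrow>_" fscale upper.cone_chain
    by (rule upper.linear_cone_chain)
  interpret res: Vector_Spaces.linear "fscale::'k\<Rightarrow>_" fscale "restrict_chain (F - A)"
    by (rule linear_restrict_chain)
  show ?thesis unfolding Vector_Spaces.linear_iff retract_def
    by (intro conjI vector_space_fscale allI)
      (simp_all add: cone.add res.add cone.scale res.scale bd_add bd_scale fun_eq_iff
        right_diff_distrib)
qed

lemma retract_lower_chain: "z \<in> chains A p \<Longrightarrow> retract p z = z"
  unfolding retract_def using restrict_chain_disjoint[of z A p "F - A"] by simp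

lemma restrict_bd_cone_chain:
  assumes "y \<in> chains (F - A) p"
  shows "restrict_chain (F - A) (bd F (p + 1) (upper.cone_chain y))
       = bd (F - A) (p + 1) (upper.cone_chain y)"
  using bd_upper[of "p + 1" "upper.cone_chain y"]
    restrict_chain_id[OF upper.cone_chain_chains[OF assms]]
  by simp

lemma retract_cycle:
  assumes "z \<in> cycles F p"
  shows "retract p z \<in> cycles A p"
proof -
  have z: "z \<in> chains F p" "bd F p z = 0" using assms by (auto simp: cycles_def)
  define y where "y = restrict_chain (F - A) z"
  have yB: "y \<in> chains (F - A) p" unfolding y_def by (rule restrict_chain_chains[OF z(1)])
  have "bd (F - A) p y = 0" unfolding y_def using bd_upper[of p z] z(2) by simp
  then have cone_y: "bd (F - A) (p + 1) (upper.cone_chain y) = y"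
    using upper.bd_cone_chain_add_cone_chain_bd[OF yB] by simp
  have "retract p z \<in> chains F p"
    unfolding retract_def using z(1) bd_chains' subspace_chains FS.subspace_diff by blast
  moreover have "restrict_chain (F - A) (retract p z) = 0"
    using restrict_bd_cone_chain[OF yB] cone_y
    by (simp add: retract_def restrict_chain_diff y_def[symmetric])
  ultimately have rA: "retract p z \<in> chains A p"
    using restrict_chain_eq_0_chains[of _ F p "F - A"] by (simp add: Diff_Diff_lower)
  have "bd F p (retract p z) = 0" unfolding retract_def bd_diff z(2) bd_bd' by simp
  then show ?thesis using rA bd_lower[OF rA] by (simp add: cycles_def)
qed

lemma retract_cycles: "retract p ` cycles F p = (cycles A p :: (_ \<Rightarrow> 'k::field) set)"
proof
  show "retract p ` cycles F p \<subseteq> (cycles A p :: (_ \<Rightarrow> 'k) set)" using retract_cycle by blast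
  show "cycles A p \<subseteq> retract p ` (cycles F p :: (_ \<Rightarrow> 'k) set)"
    using lower_cycles_subset retract_lower_chain by (force simp: cycles_def image_iff)
qed

lemma retract_boundaries: "retract p ` boundaries F p = (boundaries A p :: (_ \<Rightarrow> 'k::field) set)"
proof
  show "boundaries A p \<subseteq> retract p ` (boundaries F p :: (_ \<Rightarrow> 'k) set)"
    using lower_boundaries_subset retract_lower_chain[OF bd_chains']
    by (force simp: boundaries_def image_iff)
  show "retract p ` boundaries F p \<subseteq> (boundaries A p :: (_ \<Rightarrow> 'k) set)"
  proof
    fix y :: "_ \<Rightarrow> 'k" assume "y \<in> retract p ` boundaries F p"
    then obtain c where c: "c \<in> chains F (p + 1)" "y = retract p (bd F (p + 1) c)"
      by (auto simp: boundaries_def)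
    define b where "b = bd F (p + 1) c"
    define c1 where "c1 = c - upper.cone_chain (restrict_chain (F - A) b)"
    \<comment> \<open>\<open>y\<close> bounds \<open>c1\<close>; coning off the upper part of \<open>c1\<close> yields a chain of \<open>A\<close>
      with boundary \<open>y\<close>\<close>
    have c1F: "c1 \<in> chains F (p + 1)" unfolding c1_def
      using c(1) upper.cone_chain_chains[OF restrict_chain_chains[of b F p]] bd_chains'
        chains_mono[of "F - A" F] subspace_chains FS.subspace_diff b_def
      by (metis Diff_subset subsetD)
    have yc1: "y = bd F (p + 1) c1" unfolding c1_def bd_diff c(2) retract_def b_def by simp
    define y1 where "y1 = restrict_chain (F - A) c1"
    have y1B: "y1 \<in> chains (F - A) (p + 1)" unfolding y1_def by (rule restrict_chain_chains[OF c1F])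
    have "bd (F - A) (p + 1) y1 = restrict_chain (F - A) y" unfolding y1_def bd_upper yc1 ..
    also have "\<dots> = 0"
    proof -
      have "bd F (p + 1) c \<in> cycles F p" unfolding cycles_def
        using bd_chains'[of F p c] bd_bd'[of p c] by blast
      then have "y \<in> chains A p" using retract_cycle c(2) by (auto simp: cycles_def)
      then show ?thesis by (rule restrict_chain_disjoint) blast
    qed
    finally have cone_y1: "bd (F - A) (p + 1 + 1) (upper.cone_chain y1) = y1"
      using upper.bd_cone_chain_add_cone_chain_bd[OF y1B] by simp
    define c2 where "c2 = c1 - bd F (p + 1 + 1) (upper.cone_chain y1)"
    have "c2 \<in> chains F (p + 1)" unfolding c2_def
      using c1F bd_chains' subspace_chains FS.subspace_diff by blast
    moreover have "restrict_chain (F - A) c2 = 0"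
      using restrict_bd_cone_chain[OF y1B] cone_y1 by (simp add: c2_def restrict_chain_diff y1_def)
    ultimately have c2A: "c2 \<in> chains A (p + 1)"
      using restrict_chain_eq_0_chains[of c2 F "p + 1" "F - A"] by (simp add: Diff_Diff_lower)
    have "y = bd A (p + 1) c2"
      using bd_lower[OF c2A] unfolding c2_def bd_diff bd_bd' yc1 by simp
    then show "y \<in> boundaries A p" using c2A by (auto simp: boundaries_def)
  qed
qed

lemma retract_eq_0_boundary:
  assumes "z \<in> cycles F p" "retract p z = (0 :: _ \<Rightarrow> 'k::field)"
  shows "z \<in> boundaries F p"
proof -
  have "z \<in> chains F p" using assms(1) by (auto simp: cycles_def)
  then have "upper.cone_chain (restrict_chain (F - A) z) \<in> chains F (p + 1)"
    using upper.cone_chain_chains[OF restrict_chain_chains] chains_mono[of "F - A" F] by blast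
  moreover have "z = bd F (p + 1) (upper.cone_chain (restrict_chain (F - A) z))"
    using assms(2) unfolding retract_def by simp
  ultimately show ?thesis by (auto simp: boundaries_def)
qed

theorem rhom_dim_remove_cone_upper: "rhom_dim TYPE('k::field) F p = rhom_dim TYPE('k) A p"
  by (rule rhom_dim_eq_if_induced_iso[OF linear_retract finite_family convex_family
        retract_cycles retract_boundaries retract_eq_0_boundary])

end

section \<open>Joining a block of top vertices shifts homology\<close>

text \<open>Since the vertices of \<open>X\<close> lie above those of \<open>G\<close>, adding \<open>X\<close> to every face of \<open>G\<close> leaves
  all orientation signs unchanged.\<close>

locale top_block =
  fixes G :: "nat set set" and X :: "nat set"
  assumes finite_block: "finite X" and finite_family: "finite_family G"
    and convex_family: "convex_family G"
    and below_block: "\<And>\<gamma> u v. \<gamma> \<in> G \<Longrightarrow> u \<in> \<gamma> \<Longrightarrow> v \<in> X \<Longrightarrow> u < v"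
begin

abbreviation lifted :: "nat set set" where
  "lifted \<equiv> (\<lambda>\<gamma>. \<gamma> \<union> X) ` G"

definition unlift :: "(nat set \<Rightarrow> 'k::field) \<Rightarrow> nat set \<Rightarrow> 'k" where
  "unlift c = (\<lambda>\<sigma>. if \<sigma> \<in> G then c (\<sigma> \<union> X) else 0)"

definition lift :: "(nat set \<Rightarrow> 'k::field) \<Rightarrow> nat set \<Rightarrow> 'k" where
  "lift c = (\<lambda>\<tau>. if \<tau> \<in> lifted then c (\<tau> - X) else 0)"

lemma finite_face: "\<gamma> \<in> G \<Longrightarrow> finite \<gamma>"
  using finite_family by (simp add: finite_family_def)

lemma face_Int_block: "\<gamma> \<in> G \<Longrightarrow> \<gamma> \<inter> X = {}"
  using below_block by fastforce

lemma lifted_Diff_block: "\<gamma> \<in> G \<Longrightarrow> (\<gamma> \<union> X) - X = \<gamma>"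
  using face_Int_block by blast

lemma card_lifted: "\<gamma> \<in> G \<Longrightarrow> int (card (\<gamma> \<union> X)) = int (card \<gamma>) + int (card X)"
  using card_Un_disjoint[OF finite_face finite_block face_Int_block] by simp

lemma finite_family_lifted: "finite_family lifted"
  using finite_family finite_block by (auto simp: finite_family_def)

lemma convex_family_lifted: "convex_family lifted"
  unfolding convex_family_def
proof (intro allI impI)
  fix \<rho> \<sigma> \<tau> assume "\<rho> \<in> lifted" "\<sigma> \<in> lifted" "\<rho> \<subseteq> \<tau>" "\<tau> \<subseteq> \<sigma>"
  then obtain \<gamma> \<delta> where \<gamma>: "\<gamma> \<in> G" "\<rho> = \<gamma> \<union> X" and \<delta>: "\<delta> \<in> G" "\<sigma> = \<delta> \<union> X" "\<tau> \<subseteq> \<sigma>"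
    by blast
  have "\<tau> - X \<in> G"
    using convex_family \<gamma> \<delta> \<open>\<rho> \<subseteq> \<tau>\<close> lifted_Diff_block[OF \<gamma>(1)] lifted_Diff_block[OF \<delta>(1)]
    unfolding convex_family_def by (metis Diff_mono order_refl)
  moreover have "\<tau> = (\<tau> - X) \<union> X" using \<gamma>(2) \<open>\<rho> \<subseteq> \<tau>\<close> by blast
  ultimately show "\<tau> \<in> lifted" by blast
qed

lemma faces_lifted_iff:
  assumes "\<gamma> \<in> G"
  shows "\<gamma> \<union> X \<in> faces lifted p \<longleftrightarrow> \<gamma> \<in> faces G (p - int (card X))"
proof -
  have "\<gamma> \<union> X \<in> lifted" using assms by blast
  then show ?thesis
    using assms finite_face[OF assms] finite_block card_lifted[OF assms]
    unfolding faces_iff by (simp add: algebra_simps)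
qed

lemma linear_unlift: "Vector_Spaces.linear (fscale::'k::field\<Rightarrow>_) fscale unlift"
  unfolding Vector_Spaces.linear_iff
  by (intro conjI vector_space_fscale allI) (auto simp: unlift_def fun_eq_iff)

lemma unlift_0 [simp]: "unlift 0 = (0 :: _ \<Rightarrow> 'k::field)"
  by (simp add: unlift_def fun_eq_iff)

lemma unlift_chains:
  assumes c: "c \<in> chains lifted p"
  shows "unlift c \<in> chains G (p - int (card X))"
proof (rule in_chainsI)
  fix \<sigma> assume "unlift c \<sigma> \<noteq> 0"
  then have \<sigma>: "\<sigma> \<in> G" "c (\<sigma> \<union> X) \<noteq> 0" by (auto simp: unlift_def split: if_splits)
  then show "\<sigma> \<in> faces G (p - int (card X))"
    using in_chainsD[OF c] faces_lifted_iff[OF \<sigma>(1)] by blast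
qed

lemma lift_chains:
  assumes c: "c \<in> chains G (p - int (card X))"
  shows "lift c \<in> chains lifted p"
proof (rule in_chainsI)
  fix \<tau> assume "lift c \<tau> \<noteq> 0"
  then obtain \<gamma> where \<gamma>: "\<gamma> \<in> G" "\<tau> = \<gamma> \<union> X" "c \<gamma> \<noteq> 0"
    by (auto simp: lift_def lifted_Diff_block split: if_splits)
  then show "\<tau> \<in> faces lifted p" using in_chainsD[OF c] faces_lifted_iff[OF \<gamma>(1)] by blast
qed

lemma unlift_lift: "c \<in> chains G q \<Longrightarrow> unlift (lift c) = c"
  using faces_subset
    by (auto simp: unlift_def lift_def lifted_Diff_block fun_eq_iff dest: in_chainsD)

lemma unlift_eq_0:
  assumes c: "c \<in> chains lifted p" and "unlift c = 0"
  shows "c = 0"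
proof
  fix \<tau>
  show "c \<tau> = 0 \<tau>"
  proof (rule ccontr)
    assume "c \<tau> \<noteq> 0 \<tau>"
    then obtain \<gamma> where "\<gamma> \<in> G" "\<tau> = \<gamma> \<union> X" "c \<tau> \<noteq> 0"
      using in_chainsD[OF c] faces_subset by fastforce
    then show False using fun_cong[OF \<open>unlift c = 0\<close>, of \<gamma>] by (simp add: unlift_def)
  qed
qed

lemma insert_sign_lifted:
  assumes "insert v \<gamma> \<in> G"
  shows "insert_sign v (\<gamma> \<union> X) = insert_sign v \<gamma>"
proof -
  have "\<not> u < v" if "u \<in> X" for u using below_block[OF assms insertI1 that] by simp
  then have "{u\<in>\<gamma> \<union> X. u < v} = {u\<in>\<gamma>. u < v}" by blast
  then show ?thesis by (simp add: insert_sign_def)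
qed

lemma cofaces_lifted:
  assumes "\<sigma> \<in> G"
  shows "{v. v \<notin> \<sigma> \<union> X \<and> insert v (\<sigma> \<union> X) \<in> faces lifted p}
       = {v. v \<notin> \<sigma> \<and> insert v \<sigma> \<in> faces G (p - int (card X))}"
proof -
  have lifted_iff: "insert v (\<sigma> \<union> X) \<in> lifted \<longleftrightarrow> insert v \<sigma> \<in> G" if "v \<notin> \<sigma> \<union> X" for v
  proof
    assume "insert v (\<sigma> \<union> X) \<in> lifted"
    then obtain \<gamma> where \<gamma>: "\<gamma> \<in> G" "insert v (\<sigma> \<union> X) = \<gamma> \<union> X" by blast
    have "\<gamma> = (\<gamma> \<union> X) - X" using lifted_Diff_block[OF \<gamma>(1)] by simp
    also have "\<dots> = insert v (\<sigma> \<union> X) - X" by (simp only: \<gamma>(2))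
    also have "\<dots> = insert v \<sigma>" using that face_Int_block[OF assms] by blast
    finally show "insert v \<sigma> \<in> G" using \<gamma>(1) by simp
  next
    assume "insert v \<sigma> \<in> G"
    then show "insert v (\<sigma> \<union> X) \<in> lifted" by (rule image_eqI[rotated]) simp
  qed
  show ?thesis
  proof (rule set_eqI)
    fix v
    show "v \<in> {v. v \<notin> \<sigma> \<union> X \<and> insert v (\<sigma> \<union> X) \<in> faces lifted p}
      \<longleftrightarrow> v \<in> {v. v \<notin> \<sigma> \<and> insert v \<sigma> \<in> faces G (p - int (card X))}"
    proof
      assume "v \<in> {v. v \<notin> \<sigma> \<union> X \<and> insert v (\<sigma> \<union> X) \<in> faces lifted p}"
      then have v: "v \<notin> \<sigma> \<union> X" "insert v (\<sigma> \<union> X) \<in> faces lifted p" by auto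
      then have "insert v \<sigma> \<in> G" using lifted_iff by (simp add: faces_iff)
      then show "v \<in> {v. v \<notin> \<sigma> \<and> insert v \<sigma> \<in> faces G (p - int (card X))}"
        using v faces_lifted_iff[of "insert v \<sigma>" p] by simp
    next
      assume "v \<in> {v. v \<notin> \<sigma> \<and> insert v \<sigma> \<in> faces G (p - int (card X))}"
      then have v: "v \<notin> \<sigma>" "insert v \<sigma> \<in> faces G (p - int (card X))" by auto
      then have G: "insert v \<sigma> \<in> G" by (simp add: faces_iff)
      then have "v \<notin> X" using below_block[OF G, of v] by blast
      then show "v \<in> {v. v \<notin> \<sigma> \<union> X \<and> insert v (\<sigma> \<union> X) \<in> faces lifted p}"
        using v faces_lifted_iff[OF G, of p] by simp
    qed
  qed
qed

lemma bd_unlift: "bd G (p - int (card X)) (unlift c) = unlift (bd lifted p (c :: _ \<Rightarrow> 'k::field))"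
proof
  fix \<sigma>
  show "bd G (p - int (card X)) (unlift c) \<sigma> = unlift (bd lifted p c) \<sigma>"
  proof (cases "\<sigma> \<in> G")
    case False
    then have "\<sigma> \<notin> faces G (p - int (card X) - 1)" by (simp add: faces_iff)
    then show ?thesis using False by (simp add: bd_eq unlift_def)
  next
    case True
    have face: "\<sigma> \<in> faces G (p - int (card X) - 1) \<longleftrightarrow> \<sigma> \<union> X \<in> faces lifted (p - 1)"
      using faces_lifted_iff[OF True, of "p - 1"] by (simp add: diff_diff_eq add.commute)
    have sum_eq: "insert_sign v \<sigma> * unlift c (insert v \<sigma>)
        = insert_sign v (\<sigma> \<union> X) * c (insert v (\<sigma> \<union> X))"
      if "v \<in> {v. v \<notin> \<sigma> \<and> insert v \<sigma> \<in> faces G (p - int (card X))}" for v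
    proof -
      have "insert v \<sigma> \<in> G" using that by (simp add: faces_iff)
      moreover from this have "insert_sign v (\<sigma> \<union> X) = (insert_sign v \<sigma> :: 'k)"
        by (rule insert_sign_lifted)
      ultimately show ?thesis by (simp add: unlift_def)
    qed
    have "bd G (p - int (card X)) (unlift c) \<sigma> = (if \<sigma> \<union> X \<in> faces lifted (p - 1)
        then \<Sum>v\<in>{v. v \<notin> \<sigma> \<and> insert v \<sigma> \<in> faces G (p - int (card X))}.
          insert_sign v \<sigma> * unlift c (insert v \<sigma>) else 0)"
      by (simp only: bd_eq face)
    also have "\<dots> = (if \<sigma> \<union> X \<in> faces lifted (p - 1)
        then \<Sum>v\<in>{v. v \<notin> \<sigma> \<union> X \<and> insert v (\<sigma> \<union> X) \<in> faces lifted p}.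
          insert_sign v (\<sigma> \<union> X) * c (insert v (\<sigma> \<union> X)) else 0)"
      unfolding cofaces_lifted[OF True] by (rule if_cong[OF refl sum.cong[OF refl sum_eq] refl])
    also have "\<dots> = unlift (bd lifted p c) \<sigma>"
      by (simp only: unlift_def bd_eq True if_True)
    finally show ?thesis .
  qed
qed

lemma unlift_cycles:
  "unlift ` cycles lifted p = (cycles G (p - int (card X)) :: (_ \<Rightarrow> 'k::field) set)"
  (is "_ = cycles G ?q")
proof
  show "unlift ` cycles lifted p \<subseteq> (cycles G ?q :: (_ \<Rightarrow> 'k) set)"
  proof
    fix y :: "_ \<Rightarrow> 'k" assume "y \<in> unlift ` cycles lifted p"
    then obtain z where "z \<in> chains lifted p" "bd lifted p z = 0" "y = unlift z"
      by (auto simp: cycles_def)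
    then show "y \<in> cycles G ?q" using unlift_chains bd_unlift[of p z] by (simp add: cycles_def)
  qed
  show "cycles G ?q \<subseteq> unlift ` (cycles lifted p :: (_ \<Rightarrow> 'k) set)"
  proof
    fix z :: "_ \<Rightarrow> 'k" assume "z \<in> cycles G ?q"
    then have z: "z \<in> chains G ?q" "bd G ?q z = 0" by (auto simp: cycles_def)
    have "unlift (bd lifted p (lift z)) = 0"
      using bd_unlift[of p "lift z"] unlift_lift[OF z(1)] z(2) by simp
    then have "lift z \<in> cycles lifted p"
      using unlift_eq_0[OF bd_chains] lift_chains[OF z(1)] by (simp add: cycles_def)
    then show "z \<in> unlift ` cycles lifted p" using unlift_lift[OF z(1)] by force
  qed
qed

lemma unlift_boundaries:
  "unlift ` boundaries lifted p = (boundaries G (p - int (card X)) :: (_ \<Rightarrow> 'k::field) set)"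
  (is "_ = boundaries G ?q")
proof
  have shift: "p + 1 - int (card X) = ?q + 1" by simp
  show "unlift ` boundaries lifted p \<subseteq> (boundaries G ?q :: (_ \<Rightarrow> 'k) set)"
  proof
    fix y :: "_ \<Rightarrow> 'k" assume "y \<in> unlift ` boundaries lifted p"
    then obtain c where c: "c \<in> chains lifted (p + 1)" "y = unlift (bd lifted (p + 1) c)"
      by (auto simp: boundaries_def)
    then have "y = bd G (?q + 1) (unlift c)" using bd_unlift[of "p + 1" c] unfolding shift by simp
    moreover have "unlift c \<in> chains G (?q + 1)" using unlift_chains[OF c(1)] unfolding shift .
    ultimately show "y \<in> boundaries G ?q" by (auto simp: boundaries_def)
  qed
  show "boundaries G ?q \<subseteq> unlift ` (boundaries lifted p :: (_ \<Rightarrow> 'k) set)"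
  proof
    fix y :: "_ \<Rightarrow> 'k" assume "y \<in> boundaries G ?q"
    then obtain c where c: "c \<in> chains G (?q + 1)" "y = bd G (?q + 1) c"
      by (auto simp: boundaries_def)
    have "y = unlift (bd lifted (p + 1) (lift c))"
      using bd_unlift[of "p + 1" "lift c"] unlift_lift[OF c(1)] c(2) unfolding shift by simp
    moreover have "lift c \<in> chains lifted (p + 1)" using lift_chains c(1) shift by metis
    ultimately show "y \<in> unlift ` boundaries lifted p" by (auto simp: boundaries_def)
  qed
qed

theorem rhom_dim_lifted:
  "rhom_dim TYPE('k::field) lifted p = rhom_dim TYPE('k) G (p - int (card X))"
proof (rule rhom_dim_eq_if_induced_iso[OF linear_unlift finite_family_lifted convex_family_lifted
      unlift_cycles unlift_boundaries])
  show "z \<in> boundaries lifted p" if "z \<in> cycles lifted p" "unlift z = (0 :: _ \<Rightarrow> 'k)" for z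
    using unlift_eq_0 that zero_in_boundaries by (auto simp: cycles_def)
qed

end

section \<open>The complexes \<open>\<Omega>\<close> and their blocking parts\<close>

lemma Omega_iff:
  assumes "1 \<le> t"
  shows "\<sigma> \<in> Omega m t \<longleftrightarrow>
    \<sigma> \<subseteq> {1..m} \<and> (\<exists>i\<in>{1..m - t + 1}. \<forall>u\<in>\<sigma>. u < i \<or> i + t \<le> u)"
proof -
  have "u \<notin> {i..i + t - 1} \<longleftrightarrow> u < i \<or> i + t \<le> u" for u i using assms by auto
  then show ?thesis unfolding Omega_def by blast
qed

lemma Omega_down_closed: "\<sigma> \<in> Omega m t \<Longrightarrow> \<tau> \<subseteq> \<sigma> \<Longrightarrow> \<tau> \<in> Omega m t"
  unfolding Omega_def by blast

lemma finite_family_Omega: "finite_family (Omega m t)"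
proof -
  have "Omega m t \<subseteq> Pow {1..m}" unfolding Omega_def by blast
  then show ?thesis unfolding finite_family_def by (auto dest: finite_subset)
qed

lemma convex_family_Omega: "convex_family (Omega m t)"
  unfolding convex_family_def using Omega_down_closed by blast

lemma Omega_self: "Omega t t = {{}}"
  unfolding Omega_def by auto

text \<open>The faces \<open>\<sigma>\<close> of \<open>Omega (j + t) t\<close> for which \<open>\<sigma> \<union> {j + t}\<close> is not a face: the subsets of
  \<open>{1..j}\<close> meeting every window of \<open>t\<close> consecutive integers that starts in \<open>{1..j}\<close>.\<close>

definition blocking :: "nat \<Rightarrow> nat \<Rightarrow> nat set set" where
  "blocking t j = {\<sigma>. \<sigma> \<subseteq> {1..j} \<and> (\<forall>i\<in>{1..j}. \<exists>u\<in>\<sigma>. i \<le> u \<and> u < i + t)}"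

lemma blocking_mono: "\<sigma> \<in> blocking t j \<Longrightarrow> \<sigma> \<subseteq> \<tau> \<Longrightarrow> \<tau> \<subseteq> {1..j} \<Longrightarrow> \<tau> \<in> blocking t j"
  unfolding blocking_def by blast

lemma finite_family_blocking: "finite_family (blocking t j)"
proof -
  have "blocking t j \<subseteq> Pow {1..j}" unfolding blocking_def by blast
  then show ?thesis unfolding finite_family_def by (auto dest: finite_subset)
qed

lemma convex_family_blocking: "convex_family (blocking t j)"
  unfolding convex_family_def blocking_def by blast

lemma mem_Omega_add_iff:
  assumes "1 \<le> t"
  shows "\<sigma> \<in> Omega (j + t) t \<longleftrightarrow>
    \<sigma> \<subseteq> {1..j + t} \<and> (\<exists>i\<in>{1..j + 1}. \<forall>u\<in>\<sigma>. u < i \<or> i + t \<le> u)"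
  using Omega_iff[OF assms, of \<sigma> "j + t"] by simp

lemma insert_top_notin_Omega_iff:
  assumes t: "1 \<le> t" and sub: "\<sigma> \<subseteq> {1..j + t}"
  shows "insert (j + t) \<sigma> \<notin> Omega (j + t) t \<longleftrightarrow> (\<forall>i\<in>{1..j}. \<exists>u\<in>\<sigma>. i \<le> u \<and> u < i + t)"
proof -
  have "insert (j + t) \<sigma> \<subseteq> {1..j + t}" using sub t by auto
  then have "insert (j + t) \<sigma> \<notin> Omega (j + t) t
      \<longleftrightarrow> (\<forall>i\<in>{1..j + 1}. \<exists>u\<in>insert (j + t) \<sigma>. i \<le> u \<and> u < i + t)"
    unfolding mem_Omega_add_iff[OF t] by (auto simp: not_less not_le)
  \<comment> \<open>the last window contains \<open>j + t\<close>, all the others avoid it\<close>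
  also have "\<dots> \<longleftrightarrow> (\<forall>i\<in>{1..j}. \<exists>u\<in>insert (j + t) \<sigma>. i \<le> u \<and> u < i + t)"
    unfolding atLeastAtMostSuc_conv[of 1 j, unfolded Suc_eq_plus1, OF le_add2] using t by auto
  also have "\<dots> \<longleftrightarrow> (\<forall>i\<in>{1..j}. \<exists>u\<in>\<sigma>. i \<le> u \<and> u < i + t)"
    by (intro ball_cong refl) auto
  finally show ?thesis .
qed

lemma Omega_diff_star_eq_blocking:
  assumes t: "1 \<le> t"
  shows "Omega (j + t) t - {\<sigma> \<in> Omega (j + t) t. insert (j + t) \<sigma> \<in> Omega (j + t) t} = blocking t j"
    (is "?F - ?S = _")
proof (intro set_eqI iffI)
  fix \<sigma> assume "\<sigma> \<in> ?F - ?S"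
  then have sub: "\<sigma> \<subseteq> {1..j + t}" and "insert (j + t) \<sigma> \<notin> ?F"
    and free: "\<exists>i\<in>{1..j + 1}. \<forall>u\<in>\<sigma>. u < i \<or> i + t \<le> u" using mem_Omega_add_iff[OF t] by auto
  then have block: "\<forall>i\<in>{1..j}. \<exists>u\<in>\<sigma>. i \<le> u \<and> u < i + t"
    using insert_top_notin_Omega_iff[OF t sub] by blast
  \<comment> \<open>the window missed by \<open>\<sigma>\<close> must be the last one\<close>
  from free obtain i where i: "i \<in> {1..j + 1}" "\<forall>u\<in>\<sigma>. u < i \<or> i + t \<le> u" ..
  have "i = j + 1"
  proof (rule ccontr)
    assume "i \<noteq> j + 1"
    then have "i \<in> {1..j}" using i(1) by auto
    then obtain u where "u \<in> \<sigma>" "i \<le> u" "u < i + t" using block by blast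
    then show False using i(2) by fastforce
  qed
  then have "\<sigma> \<subseteq> {1..j}" using i(2) sub by fastforce
  then show "\<sigma> \<in> blocking t j" using block by (simp add: blocking_def)
next
  fix \<sigma> assume "\<sigma> \<in> blocking t j"
  then have sub: "\<sigma> \<subseteq> {1..j}" and block: "\<forall>i\<in>{1..j}. \<exists>u\<in>\<sigma>. i \<le> u \<and> u < i + t"
    by (auto simp: blocking_def)
  have sub': "\<sigma> \<subseteq> {1..j + t}" using sub by auto
  have "\<forall>u\<in>\<sigma>. u < j + 1 \<or> j + 1 + t \<le> u" using sub by auto
  then have "\<sigma> \<in> ?F"
    unfolding mem_Omega_add_iff[OF t] using sub' by (intro conjI bexI[of _ "j + 1"]) auto
  moreover have "insert (j + t) \<sigma> \<notin> ?F" using insert_top_notin_Omega_iff[OF t sub'] block by blast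
  ultimately show "\<sigma> \<in> ?F - ?S" by simp
qed

theorem rhom_dim_Omega_eq_blocking:
  assumes "1 \<le> t"
  shows "rhom_dim TYPE('k::field) (Omega (j + t) t) p = rhom_dim TYPE('k) (blocking t j) p"
proof -
  let ?m = "j + t"
  let ?F = "Omega ?m t"
  let ?S = "{\<sigma> \<in> ?F. insert ?m \<sigma> \<in> ?F}"
  interpret family_split ?F ?S
  proof
    show "\<tau> \<in> ?S" if "\<sigma> \<in> ?S" "\<tau> \<in> ?F" "\<tau> \<subseteq> \<sigma>" for \<sigma> \<tau>
      using that Omega_down_closed[of "insert ?m \<sigma>" ?m t "insert ?m \<tau>"] by blast
  qed (auto simp: finite_family_Omega convex_family_Omega)
  interpret star: cone_family ?S ?m
  proof
    show "finite_family ?S" by (rule finite_family_subset[OF finite_family_Omega]) blast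
    show "\<sigma> - {?m} \<in> ?S" if "\<sigma> \<in> ?S" for \<sigma>
      using that Omega_down_closed[of _ ?m t]
        by (metis (no_types, lifting) Diff_subset insert_Diff_single
        mem_Collect_eq subset_insertI2)
  qed simp
  have "rhom_dim TYPE('k) ?F p = rhom_dim TYPE('k) (?F - ?S) p"
    by (rule rhom_dim_remove_acyclic_lower[OF star.cycles_subset_boundaries])
  then show ?thesis using Omega_diff_star_eq_blocking[OF assms] by simp
qed

lemma blocking_diff_upper_subset_lifted:
  fixes t j :: nat
  assumes t: "1 \<le> t"
  defines "J \<equiv> j + t + 1"
  assumes \<sigma>: "\<sigma> \<in> blocking t J" "\<sigma> - {j + t} \<notin> blocking t J"
  shows "\<sigma> \<in> (\<lambda>\<gamma>. \<gamma> \<union> {j + t, J}) ` blocking t j"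
proof -
  from \<sigma>(1) have sub: "\<sigma> \<subseteq> {1..J}" and block: "\<forall>i\<in>{1..J}. \<exists>u\<in>\<sigma>. i \<le> u \<and> u < i + t"
    by (auto simp: blocking_def)
  have "J \<in> \<sigma>" using block[rule_format, of J] sub J_def by fastforce
  from \<sigma> sub obtain i where i: "i \<in> {1..J}" "\<forall>u\<in>\<sigma> - {j + t}. \<not> (i \<le> u \<and> u < i + t)"
    by (auto simp: blocking_def)
  \<comment> \<open>the window at \<open>i\<close> meets \<open>\<sigma>\<close> only in \<open>j + t\<close>, so \<open>i = j + 1\<close>\<close>
  obtain u where u: "u \<in> \<sigma>" "i \<le> u" "u < i + t" using block i(1) by blast
  then have "u = j + t" using i(2) by blast
  then have x: "j + t \<in> \<sigma>" using u by simp
  have "J \<in> \<sigma> - {j + t}" using \<open>J \<in> \<sigma>\<close> J_def by simp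
  then have "\<not> (i \<le> J \<and> J < i + t)" using i(2) by blast
  then have "i = j + 1" using u \<open>u = j + t\<close> J_def by linarith
  have gap: "u \<le> j \<or> J \<le> u" if "u \<in> \<sigma>" "u \<noteq> j + t" for u
  proof -
    have "\<not> (i \<le> u \<and> u < i + t)" using i(2) that by blast
    then show ?thesis using \<open>i = j + 1\<close> J_def by linarith
  qed
  define \<gamma> where "\<gamma> = \<sigma> - {j + t, J}"
  have "\<sigma> = \<gamma> \<union> {j + t, J}" using x \<open>J \<in> \<sigma>\<close> by (auto simp: \<gamma>_def)
  moreover have "\<gamma> \<subseteq> {1..j}" using sub gap by (force simp: \<gamma>_def)
  moreover have "\<exists>u\<in>\<gamma>. i \<le> u \<and> u < i + t" if i: "i \<in> {1..j}" for i
  proof -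
    have "i \<in> {1..J}" using i J_def by simp
    then obtain u where "u \<in> \<sigma>" "i \<le> u" "u < i + t" using block by blast
    moreover from this have "u < j + t" using i by simp
    ultimately show ?thesis using J_def by (force simp: \<gamma>_def)
  qed
  ultimately show ?thesis by (auto simp: blocking_def)
qed

lemma lifted_subset_blocking_diff_upper:
  fixes t j :: nat
  assumes t: "1 \<le> t"
  defines "J \<equiv> j + t + 1"
  assumes \<gamma>: "\<gamma> \<in> blocking t j"
  shows "\<gamma> \<union> {j + t, J} \<in> blocking t J - {\<sigma> \<in> blocking t J. \<sigma> - {j + t} \<in> blocking t J}"
proof -
  define \<sigma> where "\<sigma> = \<gamma> \<union> {j + t, J}"
  from \<gamma> have sub: "\<gamma> \<subseteq> {1..j}" and block: "\<forall>i\<in>{1..j}. \<exists>u\<in>\<gamma>. i \<le> u \<and> u < i + t"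
    by (auto simp: blocking_def)
  have "\<exists>u\<in>\<sigma>. i \<le> u \<and> u < i + t" if "i \<in> {1..J}" for i
  proof (cases "i \<le> j")
    case True
    then show ?thesis using block that by (fastforce simp: \<sigma>_def)
  next
    case False
    then show ?thesis using that t J_def by (cases "i = J") (auto simp: \<sigma>_def)
  qed
  moreover have "\<sigma> \<subseteq> {1..J}" using sub t J_def by (auto simp: \<sigma>_def)
  ultimately have "\<sigma> \<in> blocking t J" by (simp add: blocking_def)
  \<comment> \<open>removing \<open>j + t\<close> frees the window starting at \<open>j + 1\<close>\<close>
  moreover have "\<sigma> - {j + t} \<notin> blocking t J"
  proof -
    have "\<not> (j + 1 \<le> u \<and> u < j + 1 + t)" if "u \<in> \<sigma> - {j + t}" for u
      using that sub J_def by (auto simp: \<sigma>_def)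
    then show ?thesis unfolding blocking_def J_def by fastforce
  qed
  ultimately show ?thesis by (simp add: \<sigma>_def)
qed

lemma blocking_diff_upper_eq_lifted:
  assumes "1 \<le> t"
  shows "blocking t (j + t + 1) - {\<sigma> \<in> blocking t (j + t + 1). \<sigma> - {j + t} \<in> blocking t (j + t + 1)}
       = (\<lambda>\<gamma>. \<gamma> \<union> {j + t, j + t + 1}) ` blocking t j"
  using blocking_diff_upper_subset_lifted[OF assms] lifted_subset_blocking_diff_upper[OF assms]
    by blast

theorem rhom_dim_blocking_step:
  assumes t: "1 \<le> t"
  shows "rhom_dim TYPE('k::field) (blocking t (j + t + 1)) p
       = rhom_dim TYPE('k) (blocking t j) (p - 2)"
proof -
  let ?J = "j + t + 1" and ?x = "j + t"
  let ?F = "blocking t ?J"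
  let ?B = "{\<sigma> \<in> ?F. \<sigma> - {?x} \<in> ?F}"
  have sub: "\<sigma> \<subseteq> {1..?J}" if "\<sigma> \<in> ?F" for \<sigma> using that by (simp add: blocking_def)
  have upper: "\<tau> \<in> ?B" if "\<sigma> \<in> ?B" "\<tau> \<in> ?F" "\<sigma> \<subseteq> \<tau>" for \<sigma> \<tau>
  proof -
    have "\<tau> - {?x} \<in> ?F"
      using that sub[OF that(2)] blocking_mono[of "\<sigma> - {?x}" t ?J "\<tau> - {?x}"] by blast
    then show ?thesis using that(2) by simp
  qed
  have upper_part: "?F - (?F - ?B) = ?B" by blast
  interpret family_split_upper_cone ?F "?F - ?B" ?x
  proof unfold_locales
    show "\<tau> \<in> ?F - ?B" if "\<sigma> \<in> ?F - ?B" "\<tau> \<in> ?F" "\<tau> \<subseteq> \<sigma>" for \<sigma> \<tau>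
      using that upper by blast
    show "finite_family (?F - (?F - ?B))"
      unfolding upper_part by (rule finite_family_subset[OF finite_family_blocking]) blast
    show "insert ?x \<sigma> \<in> ?F - (?F - ?B)" if "\<sigma> \<in> ?F - (?F - ?B)" for \<sigma>
    proof -
      have "insert ?x \<sigma> \<subseteq> {1..?J}" using sub that t by auto
      then have "insert ?x \<sigma> \<in> ?F" using that blocking_mono[of \<sigma> t ?J] by blast
      then show ?thesis using that by simp
    qed
    show "\<sigma> - {?x} \<in> ?F - (?F - ?B)" if "\<sigma> \<in> ?F - (?F - ?B)" for \<sigma> using that by simp
  qed (simp_all add: finite_family_blocking convex_family_blocking)
  interpret top_block "blocking t j" "{?x, ?J}"
  proof unfold_locales
    show "u < v" if "\<gamma> \<in> blocking t j" "u \<in> \<gamma>" "v \<in> {?x, ?J}" for \<gamma> u v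
      using that t by (auto simp: blocking_def)
  qed (simp_all add: finite_family_blocking convex_family_blocking)
  have "rhom_dim TYPE('k) ?F p = rhom_dim TYPE('k) (?F - ?B) p"
    by (rule rhom_dim_remove_cone_upper)
  also have "?F - ?B = lifted" by (rule blocking_diff_upper_eq_lifted[OF t])
  also have "rhom_dim TYPE('k) lifted p = rhom_dim TYPE('k) (blocking t j) (p - 2)"
    using rhom_dim_lifted[of p] by simp
  finally show ?thesis .
qed

lemma blocking_short:
  assumes "1 \<le> j" "j \<le> t"
  shows "blocking t j = {\<sigma>. j \<in> \<sigma> \<and> \<sigma> \<subseteq> {1..j}}"
proof (intro set_eqI iffI)
  fix \<sigma> assume "\<sigma> \<in> blocking t j"
  then have sub: "\<sigma> \<subseteq> {1..j}" and "\<exists>u\<in>\<sigma>. j \<le> u \<and> u < j + t"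
    using assms(1) by (auto simp: blocking_def)
  then show "\<sigma> \<in> {\<sigma>. j \<in> \<sigma> \<and> \<sigma> \<subseteq> {1..j}}" using le_antisym by fastforce
next
  fix \<sigma> assume "\<sigma> \<in> {\<sigma>. j \<in> \<sigma> \<and> \<sigma> \<subseteq> {1..j}}"
  moreover have "i \<le> j \<and> j < i + t" if "i \<in> {1..j}" for i using that assms by simp
  ultimately show "\<sigma> \<in> blocking t j" unfolding blocking_def by blast
qed

lemma rhom_dim_blocking_short:
  assumes "2 \<le> j" "j \<le> t"
  shows "rhom_dim TYPE('k::field) (blocking t j) p = 0"
proof -
  interpret cone_family "blocking t j" 1
  proof unfold_locales
    show "finite_family (blocking t j)" by (rule finite_family_blocking)
  qed (use assms in \<open>auto simp: blocking_short\<close>)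
  show ?thesis by (rule rhom_dim_eq_0[OF convex_family_blocking])
qed

lemma rhom_dim_blocking_1:
  assumes "1 \<le> t"
  shows "rhom_dim TYPE('k::field) (blocking t 1) p = rhom_dim TYPE('k) {{}} (p - 1)"
proof -
  interpret top_block "{{}}" "{1}"
    by unfold_locales (auto simp: finite_family_def convex_family_def)
  have "blocking t 1 = lifted" using blocking_short[OF order_refl assms] by auto
  then show ?thesis using rhom_dim_lifted[of p] by simp
qed

theorem mainTheorem1:
  fixes n t :: nat
  assumes "1 \<le> t" and "t \<le> n"
  shows "(2 * t + 1 \<le> n \<longrightarrow>
            (\<forall>p::int. rhom_dim TYPE('k::field) (Omega n t) p
                      = rhom_dim TYPE('k) (Omega (n - t - 1) t) (p - 2)))
       \<and> (n = t \<longrightarrow>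
            (\<forall>p::int. rhom_dim TYPE('k) (Omega n t) p = rhom_dim TYPE('k) irrelevant_complex p))
       \<and> (n = t + 1 \<longrightarrow>
            (\<forall>p::int. rhom_dim TYPE('k) (Omega n t) p = rhom_dim TYPE('k) irrelevant_complex (p - 1)))
       \<and> (t + 2 \<le> n \<and> n \<le> 2 * t \<longrightarrow>
            (\<forall>p::int. rhom_dim TYPE('k) (Omega n t) p = 0))"
proof (intro conjI impI allI)
  fix p :: int
  have Omega_blocking:
    "rhom_dim TYPE('k) (Omega n t) q = rhom_dim TYPE('k) (blocking t (n - t)) q" for q
    using rhom_dim_Omega_eq_blocking[OF assms(1), of "n - t" q] assms(2) by simp
  show "rhom_dim TYPE('k) (Omega n t) p = rhom_dim TYPE('k) (Omega (n - t - 1) t) (p - 2)"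
    if "2 * t + 1 \<le> n"
  proof -
    define j where "j = n - 2 * t - 1"
    have "n - t = j + t + 1" "n - t - 1 = j + t" using that by (simp_all add: j_def)
    have "rhom_dim TYPE('k) (Omega n t) p = rhom_dim TYPE('k) (blocking t (j + t + 1)) p"
      unfolding \<open>n - t = j + t + 1\<close>[symmetric] by (rule Omega_blocking)
    also have "\<dots> = rhom_dim TYPE('k) (blocking t j) (p - 2)"
      by (rule rhom_dim_blocking_step[OF assms(1)])
    also have "\<dots> = rhom_dim TYPE('k) (Omega (n - t - 1) t) (p - 2)"
      unfolding \<open>n - t - 1 = j + t\<close> by (rule rhom_dim_Omega_eq_blocking[OF assms(1), symmetric])
    finally show ?thesis .
  qed
  show "rhom_dim TYPE('k) (Omega n t) p = rhom_dim TYPE('k) irrelevant_complex p" if "n = t"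
    using that by (simp add: Omega_self irrelevant_complex_def)
  show "rhom_dim TYPE('k) (Omega n t) p = rhom_dim TYPE('k) irrelevant_complex (p - 1)"
    if "n = t + 1"
    using that Omega_blocking rhom_dim_blocking_1[OF assms(1)] by (simp add: irrelevant_complex_def)
  show "rhom_dim TYPE('k) (Omega n t) p = 0" if "t + 2 \<le> n \<and> n \<le> 2 * t"
  proof -
    have "2 \<le> n - t" "n - t \<le> t" using that by auto
    then show ?thesis using Omega_blocking rhom_dim_blocking_short by simp
  qed
qed

end
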